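(* Let $\mathcal{S}\subseteq\{0,1\}^n$ be comonotone, let $\mathcal{P}=\{x\in\mathbb{R}^n: Mx\le b\}$ with $M\in\mathbb{R}^{m\times n}$, $b\in\mathbb{R}^m$, and let $\mathcal{X}=\mathcal{S}\cap\mathcal{P}$ satisfy $\operatorname{conv}(\mathcal{S}\cap\mathcal{P})=\operatorname{conv}(\mathcal{S})\cap\mathcal{P}$. Then for every $v\in\mathbb{R}^n$ there exists $\gamma\in\mathbb{R}^m_+$ such that, for all $\bar x$: $\bar x\in\arg\max_{x\in\mathcal{X}}v^\top x$ if and only if $$\bar x\in\mathcal{X}\cap\mathcal{P}_=(\gamma)\cap\arg\max_{x\in\mathcal{S}}(v-M^\top\gamma)^\top x,$$ where $\mathcal{P}_=(\gamma)=\{x\in\mathbb{R}^n: (Mx)_i=b_i\ \text{for all } i\in[m]\text{ with }\gamma_i\neq0\}$.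
   Context: $\Pi_n$ is the set of permutations of $[n]$; for $\pi\in\Pi_n$, $\mathcal{Z}(\pi)=\{x\in\mathbb{R}^n: x_{\pi(1)}\ge\cdots\ge x_{\pi(n)}\}$. A set $\mathcal{S}\subseteq\mathbb{R}^n$ is comonotone if there is a map $\Psi:\Pi_n\to\Pi_n$ such that for every $\pi\in\Pi_n$ and every $v\in\mathcal{Z}(\pi)$, whenever $\max_{x\in\mathcal{S}}v^\top x$ attains its optimum, it has an optimal solution in $\mathcal{Z}(\Psi(\pi))$. *)

theory Defs
  imports "HOL-Analysis.Analysis" "HOL-Combinatorics.Permutations"
begin

text \<open>Coordinates are indexed by a finite linearly ordered type 'n, standing for [n]
  with its natural order. Permutations of [n] are bijections p with p permutes UNIV.\<close>

definition Zcone :: "('n::{finite,linorder} \<Rightarrow> 'n) \<Rightarrow> (real^'n::{finite,linorder}) set" where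
  "Zcone p = {x. \<forall>i j. i \<le> j \<longrightarrow> x $ (p j) \<le> x $ (p i)}"

definition argmax_lin :: "real^'n \<Rightarrow> (real^'n) set \<Rightarrow> (real^'n) set" where
  "argmax_lin v A = {x \<in> A. \<forall>y \<in> A. v \<bullet> y \<le> v \<bullet> x}"

definition comonotone :: "(real^'n::{finite,linorder}) set \<Rightarrow> bool" where
  "comonotone S \<longleftrightarrow>
     (\<exists>Psi :: ('n \<Rightarrow> 'n) \<Rightarrow> ('n \<Rightarrow> 'n).
        (\<forall>p. p permutes (UNIV :: 'n set) \<longrightarrow> Psi p permutes (UNIV :: 'n set)) \<and>
        (\<forall>p v. p permutes (UNIV :: 'n set) \<longrightarrow> v \<in> Zcone p \<longrightarrow>
            argmax_lin v S \<noteq> {} \<longrightarrow> argmax_lin v S \<inter> Zcone (Psi p) \<noteq> {}))"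

definition polyh :: "real^'n^'m \<Rightarrow> real^'m \<Rightarrow> (real^'n) set" where
  "polyh M b = {x. \<forall>i. (M *v x) $ i \<le> b $ i}"

definition polyh_eq :: "real^'n^'m \<Rightarrow> real^'m \<Rightarrow> real^'m \<Rightarrow> (real^'n) set" where
  "polyh_eq M b \<gamma> = {x. \<forall>i. \<gamma> $ i \<noteq> 0 \<longrightarrow> (M *v x) $ i = b $ i}"

end

theory Submission
  imports Defs
begin

(* Binary S is finite, so the maximum c of v over S \<inter> P is attained, and by the hull
   hypothesis c also bounds v on conv S \<inter> P. Hence (0, 1) is not a nonnegative combination
   of the vectors (M y - b, v y - c), y \<in> S, and of the slack directions (e_i, 0). This
   finitely generated cone is closed, so a hyperplane separates (0, 1) from it; scaled to
   (-\<gamma>, 1), its normal is a Lagrange multiplier \<gamma> \<ge> 0 with v y - \<gamma> M y \<le> c - \<gamma> b on S.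
   Complementary slackness then identifies the maximisers. *)

lemma finite_binary_vectors:
  fixes S :: "(real^'n) set"
  assumes "\<forall>x\<in>S. \<forall>i. x $ i = 0 \<or> x $ i = 1"
  shows "finite S"
proof (rule finite_subset)
  show "S \<subseteq> range (\<lambda>B::'n set. \<chi> i. if i \<in> B then 1 else 0)"
  proof
    fix x assume "x \<in> S"
    then have "x = (\<chi> i. if i \<in> {j. x $ j = 1} then 1 else 0)"
      using assms by (auto simp: vec_eq_iff)
    then show "x \<in> range (\<lambda>B::'n set. \<chi> i. if i \<in> B then 1 else 0)"
      by blast
  qed
qed simp

lemma convex_hull_affine_image:
  assumes "linear f"
  shows "convex hull ((\<lambda>x. f x + a) ` S) = (\<lambda>x. f x + a) ` (convex hull S)"
proof -
  have "(\<lambda>x. f x + a) ` T = (\<lambda>y. a + y) ` f ` T" for T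
    by (auto simp: image_image add.commute)
  then show ?thesis
    by (simp add: convex_hull_translation convex_hull_linear_image[OF assms])
qed

lemma convex_cone_nonneg_orthant: "convex_cone {w :: real^'m. \<forall>i. 0 \<le> w $ i}"
  by (auto simp: convex_cone_iff)

lemma separating_hyperplane_closed_cone:
  fixes K :: "'a::euclidean_space set"
  assumes "convex_cone K" "closed K" "d \<notin> K"
  obtains a where "\<forall>x\<in>K. a \<bullet> x \<le> 0" "0 < a \<bullet> d"
proof -
  obtain a c where ad: "a \<bullet> d < c" and aK: "\<forall>x\<in>K. c < a \<bullet> x"
    using separating_hyperplane_closed_point assms convex_cone_def by metis
  have "c < 0"
    using aK convex_cone_contains_0[OF assms(1)] by force
  have "0 \<le> a \<bullet> x" if "x \<in> K" for x
  proof (rule ccontr)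
    assume "\<not> 0 \<le> a \<bullet> x"
    then have "(c / (a \<bullet> x)) *\<^sub>R x \<in> K"
      using \<open>c < 0\<close> \<open>x \<in> K\<close> assms(1) by (intro convex_cone_scaleR) (auto simp: divide_nonpos_neg)
    then show False
      using aK \<open>\<not> 0 \<le> a \<bullet> x\<close> by fastforce
  qed
  then show thesis
    using that[of "-a"] ad \<open>c < 0\<close> by auto
qed

definition lagrange_cone ::
    "(real^'n) set \<Rightarrow> real^'n^'m \<Rightarrow> real^'m \<Rightarrow> real^'n \<Rightarrow> real \<Rightarrow> ((real^'m) \<times> real) set" where
  "lagrange_cone S M b v c =
     convex_cone hull ((\<lambda>y. (M *v y - b, v \<bullet> y - c)) ` S \<union> range (\<lambda>i. (axis i 1, 0)))"

lemma convex_cone_lagrange_cone: "convex_cone (lagrange_cone S M b v c)"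
  unfolding lagrange_cone_def by (rule convex_cone_convex_cone_hull)

lemma closed_lagrange_cone: "finite S \<Longrightarrow> closed (lagrange_cone S M b v c)"
  unfolding lagrange_cone_def by (intro closed_convex_cone_hull) auto

lemma lagrange_cone_generators:
  shows "y \<in> S \<Longrightarrow> (M *v y - b, v \<bullet> y - c) \<in> lagrange_cone S M b v c"
    and "(axis i 1, 0) \<in> lagrange_cone S M b v c"
  unfolding lagrange_cone_def by (auto intro: hull_inc)

lemma lagrange_cone_excludes_improvement:
  fixes S :: "(real^'n) set" and M :: "real^'n^'m"
  assumes bound: "\<forall>x \<in> convex hull S \<inter> polyh M b. v \<bullet> x \<le> c"
  shows "(0, 1) \<notin> lagrange_cone S M b v c"
proof
  let ?f = "\<lambda>y. (M *v y - b, v \<bullet> y - c)"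
  assume "(0, 1) \<in> lagrange_cone S M b v c"
  then obtain k w where k: "k \<in> convex_cone hull (?f ` S)"
    and w: "w \<in> convex_cone hull range (\<lambda>i. (axis i (1::real), 0::real))" and sum: "(0, 1) = k + w"
    by (auto simp: lagrange_cone_def convex_cone_hull_Un)
  have "convex_cone hull range (\<lambda>i. (axis i (1::real), 0::real)) \<subseteq> {w :: real^'m. \<forall>i. 0 \<le> w $ i} \<times> {0}"
    by (rule hull_minimal) (auto simp: axis_def intro: convex_cone_Times convex_cone_nonneg_orthant)
  with w obtain u where u: "w = (u, 0)" "\<forall>i. 0 \<le> u $ i"
    by auto
  have f_eq: "?f = (\<lambda>y. (M *v y, v \<bullet> y) + (- b, - c))"
    by auto
  have "linear (\<lambda>y. (M *v y, v \<bullet> y))"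
    by (intro linearI) (auto simp: matrix_vector_right_distrib inner_add_right matrix_vector_mult_scaleR)
  then have "convex hull (?f ` S) = ?f ` (convex hull S)"
    unfolding f_eq by (rule convex_hull_affine_image)
  moreover have "k \<noteq> 0"
    using sum u by auto
  ultimately obtain t x where "0 \<le> t" "x \<in> convex hull S" "k = t *\<^sub>R ?f x"
    using k by (auto simp: convex_cone_hull_separate conic_hull_explicit)
  with sum u have fst: "t *\<^sub>R (M *v x - b) + u = 0" and snd: "t * (v \<bullet> x - c) = 1"
    by auto
  from snd \<open>0 \<le> t\<close> have "0 < t" "c < v \<bullet> x"
    using zero_less_mult_iff[of t "v \<bullet> x - c"] by auto
  have "x \<in> polyh M b"
  proof -
    have "t * ((M *v x) $ i - b $ i) \<le> 0" for i
      using arg_cong[OF fst, of "\<lambda>z. z $ i"] u(2)[rule_format, of i] by (simp add: algebra_simps)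
    then show ?thesis
      using \<open>0 < t\<close> by (auto simp: polyh_def mult_le_0_iff)
  qed
  with bound \<open>x \<in> convex hull S\<close> have "v \<bullet> x \<le> c"
    by blast
  with \<open>c < v \<bullet> x\<close> show False
    by simp
qed

lemma lagrange_multiplier_exists:
  fixes S :: "(real^'n) set" and M :: "real^'n^'m"
  assumes "finite S" and bound: "\<forall>x \<in> convex hull S \<inter> polyh M b. v \<bullet> x \<le> c"
  obtains \<gamma> where "\<forall>i. 0 \<le> \<gamma> $ i" "\<forall>y\<in>S. v \<bullet> y - \<gamma> \<bullet> (M *v y) \<le> c - \<gamma> \<bullet> b"
proof -
  obtain a where a_le: "\<forall>z\<in>lagrange_cone S M b v c. a \<bullet> z \<le> 0" and "0 < a \<bullet> (0, 1)"
    using separating_hyperplane_closed_cone[OF convex_cone_lagrange_cone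
        closed_lagrange_cone[OF \<open>finite S\<close>] lagrange_cone_excludes_improvement[OF bound]] .
  obtain \<alpha> \<beta> where a: "a = (\<alpha>, \<beta>)"
    by fastforce
  have "0 < \<beta>"
    using \<open>0 < a \<bullet> (0, 1)\<close> by (simp add: a)
  define \<gamma> where "\<gamma> = - (1 / \<beta>) *\<^sub>R \<alpha>"
  have "0 \<le> \<gamma> $ i" for i
  proof -
    have "\<alpha> $ i \<le> 0"
      using a_le lagrange_cone_generators(2)[of i] by (force simp: a inner_axis)
    then show ?thesis
      using \<open>0 < \<beta>\<close> by (simp add: \<gamma>_def divide_nonpos_pos)
  qed
  moreover have "v \<bullet> y - \<gamma> \<bullet> (M *v y) \<le> c - \<gamma> \<bullet> b" if "y \<in> S" for y
  proof -
    have "\<alpha> \<bullet> (M *v y - b) + \<beta> * (v \<bullet> y - c) \<le> 0"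
      using a_le lagrange_cone_generators(1)[OF that] by (force simp: a)
    then have "(\<alpha> \<bullet> (M *v y - b)) / \<beta> + (v \<bullet> y - c) \<le> 0"
      using \<open>0 < \<beta>\<close> by (simp add: field_simps)
    then show ?thesis
      by (simp add: \<gamma>_def inner_diff_right diff_divide_distrib)
  qed
  ultimately show thesis
    using that by blast
qed

lemma complementary_slackness:
  fixes M :: "real^'n^'m"
  assumes "\<forall>i. 0 \<le> \<gamma> $ i" "x \<in> polyh M b"
  shows "\<gamma> \<bullet> (M *v x) \<le> \<gamma> \<bullet> b"
    and "\<gamma> \<bullet> (M *v x) = \<gamma> \<bullet> b \<longleftrightarrow> x \<in> polyh_eq M b \<gamma>"
proof -
  have slack: "\<gamma> \<bullet> b - \<gamma> \<bullet> (M *v x) = (\<Sum>i\<in>UNIV. \<gamma> $ i * (b $ i - (M *v x) $ i))"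
    by (simp add: inner_vec_def right_diff_distrib sum_subtractf)
  have nonneg: "0 \<le> \<gamma> $ i * (b $ i - (M *v x) $ i)" for i
    using assms by (simp add: polyh_def)
  have "0 \<le> (\<Sum>i\<in>UNIV. \<gamma> $ i * (b $ i - (M *v x) $ i))"
    by (intro sum_nonneg nonneg)
  then show "\<gamma> \<bullet> (M *v x) \<le> \<gamma> \<bullet> b"
    using slack by simp
  have "\<gamma> \<bullet> (M *v x) = \<gamma> \<bullet> b \<longleftrightarrow> (\<Sum>i\<in>UNIV. \<gamma> $ i * (b $ i - (M *v x) $ i)) = 0"
    using slack by linarith
  also have "\<dots> \<longleftrightarrow> (\<forall>i. \<gamma> $ i * (b $ i - (M *v x) $ i) = 0)"
    using sum_nonneg_eq_0_iff[of UNIV, OF finite nonneg] by simp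
  also have "\<dots> \<longleftrightarrow> x \<in> polyh_eq M b \<gamma>"
    by (auto simp: polyh_eq_def)
  finally show "\<gamma> \<bullet> (M *v x) = \<gamma> \<bullet> b \<longleftrightarrow> x \<in> polyh_eq M b \<gamma>" .
qed

lemma argmax_lin_nonempty:
  assumes "finite A" "A \<noteq> {}"
  shows "argmax_lin v A \<noteq> {}"
proof -
  have "Max ((\<bullet>) v ` A) \<in> (\<bullet>) v ` A"
    using assms by simp
  then obtain x where "x \<in> A" "v \<bullet> x = Max ((\<bullet>) v ` A)"
    by auto
  then show ?thesis
    using assms by (auto simp: argmax_lin_def)
qed

lemma argmax_lin_convex_hull_le:
  assumes "x \<in> argmax_lin v A" "y \<in> convex hull A"
  shows "v \<bullet> y \<le> v \<bullet> x"
proof -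
  have "convex hull A \<subseteq> {y. v \<bullet> y \<le> v \<bullet> x}"
    using assms(1) by (intro hull_minimal) (auto simp: argmax_lin_def convex_halfspace_le)
  with assms(2) show ?thesis
    by blast
qed

lemma argmax_lin_eq_by_multiplier:
  fixes S :: "(real^'n) set" and M :: "real^'n^'m"
  assumes xs: "xs \<in> argmax_lin v (S \<inter> polyh M b)" and \<gamma>: "\<forall>i. 0 \<le> \<gamma> $ i"
    and dual: "\<forall>y\<in>S. v \<bullet> y - \<gamma> \<bullet> (M *v y) \<le> v \<bullet> xs - \<gamma> \<bullet> b"
  shows "argmax_lin v (S \<inter> polyh M b) =
           (S \<inter> polyh M b) \<inter> polyh_eq M b \<gamma> \<inter> argmax_lin (v - transpose M *v \<gamma>) S"
proof -
  have lagrangian: "(v - transpose M *v \<gamma>) \<bullet> y = v \<bullet> y - \<gamma> \<bullet> (M *v y)" for y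
    by (simp add: inner_diff_left dot_lmul_matrix)
  show ?thesis
  proof (intro equalityI subsetI)
    fix x assume x: "x \<in> argmax_lin v (S \<inter> polyh M b)"
    then have "x \<in> S" "x \<in> polyh M b" "v \<bullet> x = v \<bullet> xs"
      using xs by (auto simp: argmax_lin_def intro: antisym)
    moreover from this have "\<gamma> \<bullet> (M *v x) = \<gamma> \<bullet> b"
      using dual complementary_slackness(1)[OF \<gamma>] by fastforce
    ultimately show "x \<in> (S \<inter> polyh M b) \<inter> polyh_eq M b \<gamma> \<inter> argmax_lin (v - transpose M *v \<gamma>) S"
      using dual complementary_slackness(2)[OF \<gamma>] unfolding argmax_lin_def lagrangian by auto
  next
    fix x assume x: "x \<in> (S \<inter> polyh M b) \<inter> polyh_eq M b \<gamma> \<inter> argmax_lin (v - transpose M *v \<gamma>) S"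
    then have "\<gamma> \<bullet> (M *v x) = \<gamma> \<bullet> b"
      using complementary_slackness(2)[OF \<gamma>] by blast
    have "v \<bullet> y \<le> v \<bullet> x" if "y \<in> S \<inter> polyh M b" for y
    proof -
      have "v \<bullet> y - \<gamma> \<bullet> (M *v y) \<le> v \<bullet> x - \<gamma> \<bullet> (M *v x)"
        using x that unfolding argmax_lin_def lagrangian by blast
      moreover have "\<gamma> \<bullet> (M *v y) \<le> \<gamma> \<bullet> b"
        using complementary_slackness(1)[OF \<gamma>] that by blast
      ultimately show ?thesis
        using \<open>\<gamma> \<bullet> (M *v x) = \<gamma> \<bullet> b\<close> by simp
    qed
    with x show "x \<in> argmax_lin v (S \<inter> polyh M b)"
      by (simp add: argmax_lin_def)
  qed
qed

theorem proposition9: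
  fixes S :: "(real^'n::{finite,linorder}) set"
    and M :: "real^'n::{finite,linorder}^'m::finite" and b :: "real^'m"
  assumes "comonotone S"
    and "\<forall>x\<in>S. \<forall>i. x $ i = 0 \<or> x $ i = 1"
    and "convex hull (S \<inter> polyh M b) = convex hull S \<inter> polyh M b"
  shows "\<forall>v :: real^'n::{finite,linorder}. \<exists>\<gamma> :: real^'m. (\<forall>i. 0 \<le> \<gamma> $ i) \<and>
           (\<forall>xb. xb \<in> argmax_lin v (S \<inter> polyh M b) \<longleftrightarrow>
                 xb \<in> (S \<inter> polyh M b) \<inter> polyh_eq M b \<gamma> \<inter>
                       argmax_lin (v - transpose M *v \<gamma>) S)"
proof
  fix v :: "real^'n::{finite,linorder}"
  have "finite S"
    using assms(2) by (rule finite_binary_vectors)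
  show "\<exists>\<gamma>. (\<forall>i. 0 \<le> \<gamma> $ i) \<and> (\<forall>xb. xb \<in> argmax_lin v (S \<inter> polyh M b) \<longleftrightarrow>
          xb \<in> (S \<inter> polyh M b) \<inter> polyh_eq M b \<gamma> \<inter> argmax_lin (v - transpose M *v \<gamma>) S)"
  proof (cases "S \<inter> polyh M b = {}")
    case True
    then show ?thesis
      by (intro exI[of _ 0]) (auto simp: argmax_lin_def)
  next
    case False
    then obtain xs where xs: "xs \<in> argmax_lin v (S \<inter> polyh M b)"
      using argmax_lin_nonempty[of "S \<inter> polyh M b" v] \<open>finite S\<close> by blast
    then have "\<forall>x \<in> convex hull S \<inter> polyh M b. v \<bullet> x \<le> v \<bullet> xs"
      using argmax_lin_convex_hull_le assms(3) by blast
    then obtain \<gamma> :: "real^'m"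
      where "\<forall>i. 0 \<le> \<gamma> $ i" "\<forall>y\<in>S. v \<bullet> y - \<gamma> \<bullet> (M *v y) \<le> v \<bullet> xs - \<gamma> \<bullet> b"
      using lagrange_multiplier_exists \<open>finite S\<close> by blast
    then show ?thesis
      using argmax_lin_eq_by_multiplier[OF xs] by blast
  qed
qed

end
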